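(* Let $\delta>0$ be the rounding precision and let the representable numbers be the integer multiples of $\delta$. For $x\in\mathbb{R}$ let $\lfloor x\rfloor$ denote the greatest representable number $\le x$, and let stochastic rounding be the random variable $$\mathrm{fl}(x)=\begin{cases}\lfloor x\rfloor & \text{with probability } 1-\frac{x-\lfloor x\rfloor}{\delta},\\ \lfloor x\rfloor+\delta & \text{with probability } \frac{x-\lfloor x\rfloor}{\delta},\end{cases}$$ with all rounding operations performed independently. Then for real numbers $x_1,\dots,x_{N_s}$ and $\mathrm{op}\in\{+,-\}$, $$\mathrm{fl}(\mathrm{fl}(\cdots \mathrm{fl}(\mathrm{fl}(x_1)\,\mathrm{op}\,x_2)\,\mathrm{op}\,\cdots)\,\mathrm{op}\,x_{N_s})=\mathrm{fl}(x_1)\,\mathrm{op}\,\mathrm{fl}(x_2)\,\mathrm{op}\,\cdots\,\mathrm{op}\,\mathrm{fl}(x_{N_s}),$$ where the equality is understood as equality of the probability distributions of the two random variables.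
   Context: Stochastic rounding (SR) with rounding precision $\delta$ as defined in the claim. *)

theory Defs
  imports "HOL-Probability.Probability_Mass_Function"
begin

definition rd_down :: "real \<Rightarrow> real \<Rightarrow> real" where
  "rd_down d x = d * of_int \<lfloor>x / d\<rfloor>"

definition sr :: "real \<Rightarrow> real \<Rightarrow> real pmf" where
  "sr d x = map_pmf (\<lambda>b. if b then rd_down d x + d else rd_down d x)
                     (bernoulli_pmf ((x - rd_down d x) / d))"

definition sr_chain :: "real \<Rightarrow> (real \<Rightarrow> real \<Rightarrow> real) \<Rightarrow> real \<Rightarrow> real list \<Rightarrow> real pmf" where
  "sr_chain d op x1 xs = foldl (\<lambda>p x. bind_pmf p (\<lambda>v. sr d (op v x))) (sr d x1) xs"

definition sr_indep :: "real \<Rightarrow> (real \<Rightarrow> real \<Rightarrow> real) \<Rightarrow> real \<Rightarrow> real list \<Rightarrow> real pmf" where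
  "sr_indep d op x1 xs =
     foldl (\<lambda>p x. bind_pmf p (\<lambda>v. map_pmf (\<lambda>w. op v w) (sr d x))) (sr d x1) xs"

end

theory Submission
  imports Defs
begin

text \<open>Stochastic rounding commutes with translation by a representable number and with
  negation. Since every intermediate result of the rounded chain is representable, each
  step fl(v op x) can therefore be replaced by v op fl(x), with a fresh independent
  rounding of x, which turns the chain into the sum of independent roundings.\<close>

definition grid :: "real \<Rightarrow> real set" where
  "grid d = range (\<lambda>k::int. d * of_int k)"

lemma map_pmf_Not_bernoulli:
  assumes "0 \<le> p" "p \<le> 1"
  shows "map_pmf Not (bernoulli_pmf p) = bernoulli_pmf (1 - p)"
proof (rule pmf_eqI)
  fix b
  have "pmf (map_pmf Not (bernoulli_pmf p)) b = pmf (bernoulli_pmf p) (\<not> b)"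
    using pmf_map_inj'[of Not "bernoulli_pmf p" "\<not> b"] by (simp add: inj_def)
  then show "pmf (map_pmf Not (bernoulli_pmf p)) b = pmf (bernoulli_pmf (1 - p)) b"
    using assms by (cases b) auto
qed

lemma bernoulli_pmf_0: "bernoulli_pmf 0 = return_pmf False"
  by (rule pmf_eqI) (simp split: split_indicator)

lemma rd_down_in_grid: "rd_down d x \<in> grid d"
  unfolding grid_def rd_down_def by blast

lemma rd_down_plus_in_grid: "rd_down d x + d \<in> grid d"
  unfolding grid_def rd_down_def by (rule range_eqI[of _ _ "\<lfloor>x / d\<rfloor> + 1"]) (simp add: algebra_simps)

lemma set_pmf_sr_subset_grid: "set_pmf (sr d x) \<subseteq> grid d"
  unfolding sr_def using rd_down_in_grid rd_down_plus_in_grid by auto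

lemma grid_uminus: "v \<in> grid d \<Longrightarrow> - v \<in> grid d"
  unfolding grid_def by (auto intro: range_eqI[of _ _ "- k" for k])

lemma sr_prob_bounds:
  assumes "d > 0"
  shows "0 \<le> (x - rd_down d x) / d" "(x - rd_down d x) / d \<le> 1"
proof -
  have prob: "(x - rd_down d x) / d = x / d - of_int \<lfloor>x / d\<rfloor>"
    using assms by (simp add: rd_down_def field_simps)
  show "0 \<le> (x - rd_down d x) / d" "(x - rd_down d x) / d \<le> 1"
    unfolding prob by linarith+
qed

lemma rd_down_add_grid:
  assumes "d > 0" "v \<in> grid d"
  shows "rd_down d (v + x) = v + rd_down d x"
proof -
  obtain k where v: "v = d * of_int k" using assms(2) unfolding grid_def by blast
  have "(v + x) / d = of_int k + x / d" using assms(1) by (simp add: v field_simps)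
  then show ?thesis by (simp add: rd_down_def v algebra_simps)
qed

lemma sr_add_grid:
  assumes "d > 0" "v \<in> grid d"
  shows "sr d (v + x) = map_pmf ((+) v) (sr d x)"
  unfolding sr_def rd_down_add_grid[OF assms] map_pmf_comp
  by (rule map_pmf_cong) (auto simp: algebra_simps)

lemma sr_grid:
  assumes "d > 0" "v \<in> grid d"
  shows "sr d v = return_pmf v"
proof -
  have "rd_down d v = v" using rd_down_add_grid[OF assms, of 0] by (simp add: rd_down_def)
  then show ?thesis by (simp add: sr_def bernoulli_pmf_0)
qed

lemma sr_uminus:
  assumes "d > 0"
  shows "sr d (- x) = map_pmf uminus (sr d x)"
proof (cases "x \<in> grid d")
  case True
  then show ?thesis by (simp add: sr_grid[OF assms] grid_uminus)
next
  case False
  let ?r = "rd_down d x" and ?p = "(x - rd_down d x) / d"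
  have "x / d \<noteq> of_int \<lfloor>x / d\<rfloor>"
    using False assms unfolding grid_def by (metis nonzero_mult_div_cancel_left
        less_irrefl range_eqI times_divide_eq_right)
  then have floor_neg: "\<lfloor>- x / d\<rfloor> = - \<lfloor>x / d\<rfloor> - 1"
    by (simp add: floor_minus ceiling_altdef)
  \<comment> \<open>off the grid, the neighbours of \<open>-x\<close> are the negated neighbours of \<open>x\<close>, in swapped roles\<close>
  have r: "rd_down d (- x) = - ?r - d"
    unfolding rd_down_def floor_neg by (simp add: algebra_simps)
  have p: "(- x - rd_down d (- x)) / d = 1 - ?p"
    using assms by (simp add: r field_simps)
  have "sr d (- x) = map_pmf (\<lambda>b. if b then - ?r else - ?r - d) (bernoulli_pmf (1 - ?p))"
    unfolding sr_def p unfolding r by (rule map_pmf_cong) auto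
  also have "\<dots> = map_pmf (\<lambda>b. if b then - ?r else - ?r - d) (map_pmf Not (bernoulli_pmf ?p))"
    by (simp only: map_pmf_Not_bernoulli[OF sr_prob_bounds[OF assms]])
  also have "\<dots> = map_pmf uminus (sr d x)"
    unfolding sr_def map_pmf_comp by (rule map_pmf_cong) auto
  finally show ?thesis .
qed

lemma sr_diff_grid:
  assumes "d > 0" "v \<in> grid d"
  shows "sr d (v - x) = map_pmf ((-) v) (sr d x)"
  using sr_add_grid[OF assms, of "- x"] by (simp add: sr_uminus[OF assms(1)] map_pmf_comp)

lemma sr_chain_step_eq:
  assumes "d > 0" "op = (+) \<or> op = (-)" "set_pmf p \<subseteq> grid d"
  shows "bind_pmf p (\<lambda>v. sr d (op v x)) = bind_pmf p (\<lambda>v. map_pmf (op v) (sr d x))"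
proof (rule bind_pmf_cong[OF refl])
  fix v assume "v \<in> set_pmf p"
  with assms(3) have "v \<in> grid d" by blast
  then show "sr d (op v x) = map_pmf (op v) (sr d x)"
    using assms(2) sr_add_grid[OF assms(1)] sr_diff_grid[OF assms(1)] by auto
qed

lemma foldl_sr_chain_eq:
  assumes "d > 0" "op = (+) \<or> op = (-)" "set_pmf p \<subseteq> grid d"
  shows "foldl (\<lambda>p x. bind_pmf p (\<lambda>v. sr d (op v x))) p xs =
         foldl (\<lambda>p x. bind_pmf p (\<lambda>v. map_pmf (op v) (sr d x))) p xs"
  using assms(3)
proof (induction xs arbitrary: p)
  case Nil
  then show ?case by simp
next
  case (Cons x xs)
  have "set_pmf (bind_pmf p (\<lambda>v. sr d (op v x))) \<subseteq> grid d"
    using set_pmf_sr_subset_grid by auto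
  then show ?case
    using Cons.IH sr_chain_step_eq[OF assms(1,2) Cons.prems, of x] by simp
qed

theorem proposition3p5:
  fixes d x1 :: real and xs :: "real list" and op :: "real \<Rightarrow> real \<Rightarrow> real"
  assumes "d > 0"
    and "op = (+) \<or> op = (-)"
  shows "sr_chain d op x1 xs = sr_indep d op x1 xs"
  unfolding sr_chain_def sr_indep_def
  by (rule foldl_sr_chain_eq[OF assms set_pmf_sr_subset_grid])

end
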